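(* Let $C\subseteq\mathbb{F}_q^n$ be a degenerated code. Then for any code $D\subseteq\mathbb{F}_q^n$, the code $C*D$ is degenerated.
   Context: Codes are $\mathbb{F}_q$-linear subspaces of $\mathbb{F}_q^n$; $C*D$ is the span of the componentwise products $\mathbf{c}*\mathbf{d}$. The stabiliser of a code $H$ is $\mathrm{Stab}(H)=\{\mathbf{x}\in\mathbb{F}_q^n:\mathbf{x}*H\subseteq H\}$. A code $H$ is degenerated if $\dim\mathrm{Stab}(H)>1$; equivalently (a known result), $H$ is a direct sum of nonzero subcodes with disjoint supports or every generator matrix of $H$ has a zero column. *)

theory Defs
  imports "HOL-Analysis.Analysis"
begin

text \<open>Vectors of F_q^n are modelled as 'a ^ 'n with 'a a finite field and 'n a finite
  index type of cardinality n. Multiplication on 'a ^ 'n is componentwise.\<close>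

definition code :: "('a::field ^ 'n) set \<Rightarrow> bool" where
  "code C \<longleftrightarrow> vec.subspace C"

definition star_code :: "('a::field ^ 'n) set \<Rightarrow> ('a ^ 'n) set \<Rightarrow> ('a ^ 'n) set" where
  "star_code C D = vec.span {c * d | c d. c \<in> C \<and> d \<in> D}"

definition Stab :: "('a::field ^ 'n) set \<Rightarrow> ('a ^ 'n) set" where
  "Stab H = {x. \<forall>h\<in>H. x * h \<in> H}"

definition degenerated :: "('a::field ^ 'n) set \<Rightarrow> bool" where
  "degenerated H \<longleftrightarrow> vec.dim (Stab H) > 1"

end

theory Submission
  imports Defs
begin

text \<open>Multiplication by a fixed vector is linear, so a vector that stabilises \<open>C\<close>
  multiplies every generator \<open>c * d\<close> of \<open>C * D\<close> into another generator \<open>(x * c) * d\<close>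
  and hence stabilises their span. Thus \<open>Stab C \<subseteq> Stab (C * D)\<close>, and the dimension
  of the stabiliser can only grow. Neither \<open>C\<close> nor \<open>D\<close> needs to be a subspace.\<close>

lemma linear_vec_mult_left: "Vector_Spaces.linear (*s) (*s) (\<lambda>y::'a::field^'n. x * y)"
  unfolding Vector_Spaces.linear_iff
  using vec.vector_space_axioms
  by (simp add: vec_eq_iff algebra_simps)

lemma vec_mult_span_subset:
  fixes x :: "'a::field^'n"
  assumes "(\<lambda>y. x * y) ` G \<subseteq> G"
  shows "(\<lambda>y. x * y) ` vec.span G \<subseteq> vec.span G"
proof -
  have "(\<lambda>y. x * y) ` vec.span G = vec.span ((\<lambda>y. x * y) ` G)"
    by (rule vec.linear_span_image[OF linear_vec_mult_left, symmetric])
  also have "\<dots> \<subseteq> vec.span G"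
    using assms by (rule vec.span_mono)
  finally show ?thesis .
qed

lemma Stab_subset_Stab_star_code:
  fixes C D :: "('a::field ^ 'n) set"
  shows "Stab C \<subseteq> Stab (star_code C D)"
proof
  fix x assume "x \<in> Stab C"
  then have "x * c \<in> C" if "c \<in> C" for c
    using that by (simp add: Stab_def)
  then have "(\<lambda>y. x * y) ` {c * d | c d. c \<in> C \<and> d \<in> D} \<subseteq> {c * d | c d. c \<in> C \<and> d \<in> D}"
    by (auto simp flip: mult.assoc) blast
  then have "(\<lambda>y. x * y) ` star_code C D \<subseteq> star_code C D"
    unfolding star_code_def by (rule vec_mult_span_subset)
  then show "x \<in> Stab (star_code C D)"
    by (auto simp: Stab_def)
qed

theorem lemma6p5:
  fixes C D :: "('a::{field,finite} ^ 'n) set"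
  assumes "code C" and "code D" and "degenerated C"
  shows "degenerated (star_code C D)"
proof -
  have "vec.dim (Stab C) \<le> vec.dim (Stab (star_code C D))"
    by (rule vec.dim_subset[OF Stab_subset_Stab_star_code])
  then show ?thesis
    using \<open>degenerated C\<close> unfolding degenerated_def by linarith
qed

end
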